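(* Consider the discrete setting described in the context, with a fixed constant $\rho_\infty^*>0$. For every initial datum $(f^0_{ij},g^0_{ij})_{i\in\mathcal I,j\in\mathcal J}$, the linearized scheme $$\frac{f^{n+1}_{ij}-f^n_{ij}}{\Delta t}+\frac{1}{\Delta x\,\Delta v}\big(\mathcal F^{n+1}_{i+\frac12,j}-\mathcal F^{n+1}_{i-\frac12,j}\big)=-\rho_\infty^*\chi_{1,j}\rho^{n+1}_{g,i}-(\rho_\infty^* )^{-1}f^{n+1}_{ij},$$ $$\frac{g^{n+1}_{ij}-g^n_{ij}}{\Delta t}+\frac{1}{\Delta x\,\Delta v}\big(\mathcal G^{n+1}_{i+\frac12,j}-\mathcal G^{n+1}_{i-\frac12,j}\big)=-(\rho_\infty^* )^{-1}\chi_{2,j}\rho^{n+1}_{f,i}-\rho_\infty^*\,g^{n+1}_{ij}$$ ($n\ge0$, $i\in\mathcal I$, $j\in\mathcal J$) admits a unique solution $(f^n_{ij},g^n_{ij})_{n\ge0,i\in\mathcal I,j\in\mathcal J}$.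
   Context: Space mesh: $N$ uniform cells of length $\Delta x$ of the torus, indexed by $i\in\mathcal I=\mathbb Z/N\mathbb Z$ (periodic). Velocity mesh: $\Delta v=v^*/L$, cells indexed by $j\in\mathcal J=\{-L+1,\dots,L\}$ with midpoints $v_j=(j-\tfrac12)\Delta v$. Time step $\Delta t>0$; $\lambda=\Delta x/(2\Delta t)>0$. For $k=1,2$, $\chi_{k,j}>0$, $\chi_{k,j}=\chi_{k,1-j}$, $\sum_j\Delta v\,\chi_{k,j}=1$. Densities $\rho_{f,i}=\sum_j\Delta v\,f_{ij}$, $\rho_{g,i}=\sum_j\Delta v\,g_{ij}$. Fluxes: $\mathcal F^{n+1}_{i+\frac12,j}=\Delta v\frac{v_j}{2}(f^{n+1}_{i+1,j}+f^{n+1}_{ij})-\Delta v\,\lambda(f^{n+1}_{i+1,j}-f^{n+1}_{ij})$, and $\mathcal G$ the same with $g$ in place of $f$. *)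

theory Defs
  imports Complex_Main
begin

(* Space cells: i \<in> {0..<N}, read modulo N (torus Z/NZ).
   Velocity cells: j \<in> {-L+1..L}. *)

definition Icells :: "nat \<Rightarrow> nat set" where
  "Icells N = {0..<N}"

definition Jcells :: "nat \<Rightarrow> int set" where
  "Jcells L = {- int L + 1 .. int L}"

definition dvel :: "real \<Rightarrow> nat \<Rightarrow> real" where
  "dvel vstar L = vstar / real L"

definition vmid :: "real \<Rightarrow> nat \<Rightarrow> int \<Rightarrow> real" where
  "vmid vstar L j = (real_of_int j - 1/2) * dvel vstar L"

definition lam :: "real \<Rightarrow> real \<Rightarrow> real" where
  "lam dx dt = dx / (2 * dt)"

definition dens :: "real \<Rightarrow> nat \<Rightarrow> (nat \<Rightarrow> int \<Rightarrow> real) \<Rightarrow> nat \<Rightarrow> real" where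
  "dens vstar L h i = (\<Sum>j\<in>Jcells L. dvel vstar L * h i j)"

(* flux at the interface i+1/2 (periodic) *)
definition flux :: "nat \<Rightarrow> nat \<Rightarrow> real \<Rightarrow> real \<Rightarrow> real \<Rightarrow>
    (nat \<Rightarrow> int \<Rightarrow> real) \<Rightarrow> nat \<Rightarrow> int \<Rightarrow> real" where
  "flux N L vstar dx dt h i j =
     dvel vstar L * (vmid vstar L j / 2) * (h ((i + 1) mod N) j + h i j)
     - dvel vstar L * lam dx dt * (h ((i + 1) mod N) j - h i j)"

definition imin :: "nat \<Rightarrow> nat \<Rightarrow> nat" where
  "imin N i = (i + N - 1) mod N"

definition lin_scheme :: "nat \<Rightarrow> nat \<Rightarrow> real \<Rightarrow> real \<Rightarrow> real \<Rightarrow>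
    (int \<Rightarrow> real) \<Rightarrow> (int \<Rightarrow> real) \<Rightarrow> real \<Rightarrow>
    (nat \<Rightarrow> nat \<Rightarrow> int \<Rightarrow> real) \<Rightarrow> (nat \<Rightarrow> nat \<Rightarrow> int \<Rightarrow> real) \<Rightarrow> bool" where
  "lin_scheme N L vstar dx dt chi1 chi2 rs f g \<longleftrightarrow>
    (\<forall>n. \<forall>i\<in>Icells N. \<forall>j\<in>Jcells L.
      (f (Suc n) i j - f n i j) / dt
        + (1 / (dx * dvel vstar L)) *
          (flux N L vstar dx dt (f (Suc n)) i j - flux N L vstar dx dt (f (Suc n)) (imin N i) j)
        = - rs * chi1 j * dens vstar L (g (Suc n)) i - (1 / rs) * f (Suc n) i j
      \<and>
      (g (Suc n) i j - g n i j) / dt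
        + (1 / (dx * dvel vstar L)) *
          (flux N L vstar dx dt (g (Suc n)) i j - flux N L vstar dx dt (g (Suc n)) (imin N i) j)
        = - (1 / rs) * chi2 j * dens vstar L (f (Suc n)) i - rs * g (Suc n) i j)"

end

theory Submission
  imports Defs "HOL-Library.Function_Algebras" "HOL-Analysis.Convex"
begin

text \<open>Each time step is a square linear system for the grid values of the new time level,
  so in finite dimensions it is uniquely solvable as soon as the homogeneous system has only the
  trivial solution. To see this, test the \<open>f\<close>-equation with \<open>f / (rs chi1)\<close> and the
  \<open>g\<close>-equation with \<open>rs g / chi2\<close>. The centred flux with upwind viscosity \<open>lam\<close> is
  dissipative on the periodic mesh (summation by parts), and since \<open>chi1, chi2\<close> are
  probability weights, Cauchy-Schwarz gives \<open>rho\<^sub>f\<^sup>2 \<le> dv \<Sum>\<^sub>j f\<^sub>j\<^sup>2 / chi1\<^sub>j\<close>, so the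
  relaxation terms absorb the coupling terms: together they form
  \<open>(rho\<^sub>f / rs + rs rho\<^sub>g)\<^sup>2 / dv \<ge> 0\<close> plus nonnegative remainders. What is left is
  \<open>1/dt\<close> times a weighted \<open>L\<^sup>2\<close> energy, which must therefore vanish.\<close>

lemma (in vector_space) linear_inj_on_finite_span_imp_surj:
  assumes fin: "finite E" and lf: "Vector_Spaces.linear scale scale f"
    and into: "f ` span E \<subseteq> span E" and inj: "inj_on f (span E)"
  shows "f ` span E = span E"
proof
  interpret p: vector_space_pair scale scale by unfold_locales
  obtain B where B: "B \<subseteq> span E" "independent B" "span E \<subseteq> span B"
    using maximal_independent_subset[of "span E"] by blast
  have finB: "finite B"
    using independent_span_bound[OF fin B(2) B(1)] by blast
  have spanB: "span B = span E"
    using B span_mono[OF B(1)] span_span by (metis subset_antisym)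
  have indep_fB: "independent (f ` B)"
    using p.linear_independent_injective_image[OF lf B(2)] inj spanB by simp
  have card_fB: "card (f ` B) = card B"
    using card_image inj_on_subset[OF inj] B(1) span_superset by blast
  show "span E \<subseteq> f ` span E"
  proof
    fix a assume a: "a \<in> span E"
    have "a \<in> span (f ` B)"
    proof (rule ccontr)
      assume a_notin: "a \<notin> span (f ` B)"
      have "insert a (f ` B) \<subseteq> span B"
        using a into B(1) span_superset spanB by blast
      then have "card (insert a (f ` B)) \<le> card B"
        using independent_span_bound[OF finB independent_insertI[OF a_notin indep_fB]] by blast
      moreover have "a \<notin> f ` B" using a_notin span_superset by blast
      ultimately show False using card_fB finB by simp
    qed
    then show "a \<in> f ` span E"
      using p.linear_span_image[OF lf] spanB by simp
  qed
qed (fact into)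

definition supported_on :: "'k set \<Rightarrow> ('k \<Rightarrow> real) set" where
  "supported_on K = {u. \<forall>x. x \<notin> K \<longrightarrow> u x = 0}"

lemma fun_vector_space: "vector_space (\<lambda>c (u :: 'k \<Rightarrow> real) x. c * u x)"
  by unfold_locales (auto simp: fun_eq_iff algebra_simps)

lemma supported_on_eq_span_indicators:
  assumes "finite K"
  shows "supported_on K =
    module.span (\<lambda>c (u :: 'k \<Rightarrow> real) x. c * u x) ((\<lambda>k x. if x = k then 1 else 0) ` K)"
proof -
  let ?\<delta> = "\<lambda>k x. if x = k then 1 else 0 :: real"
  interpret V: vector_space "\<lambda>c (u :: 'k \<Rightarrow> real) x. c * u x" by (rule fun_vector_space)
  have "V.subspace (supported_on K)"
    unfolding V.subspace_def supported_on_def by auto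
  moreover have "?\<delta> ` K \<subseteq> supported_on K"
    unfolding supported_on_def by auto
  ultimately have "V.span (?\<delta> ` K) \<subseteq> supported_on K"
    using V.span_minimal by blast
  moreover have "supported_on K \<subseteq> V.span (?\<delta> ` K)"
    using assms
  proof (induction K rule: finite_induct)
    case empty
    then show ?case by (auto simp: supported_on_def fun_eq_iff V.span_zero)
  next
    case (insert k K)
    show ?case
    proof
      fix u assume u: "u \<in> supported_on (insert k K)"
      define v where "v = u - (\<lambda>x. u k * ?\<delta> k x)"
      have "v \<in> supported_on K"
        using u insert.hyps(2) unfolding v_def supported_on_def by auto
      moreover have "V.span (?\<delta> ` K) \<subseteq> V.span (?\<delta> ` insert k K)"
        by (rule V.span_mono) blast
      ultimately have "v \<in> V.span (?\<delta> ` insert k K)"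
        using insert.IH by blast
      moreover have "(\<lambda>x. u k * ?\<delta> k x) \<in> V.span (?\<delta> ` insert k K)"
        by (intro V.span_scale V.span_base) simp
      ultimately have "v + (\<lambda>x. u k * ?\<delta> k x) \<in> V.span (?\<delta> ` insert k K)"
        by (rule V.span_add)
      then show "u \<in> V.span (?\<delta> ` insert k K)"
        by (simp add: v_def)
    qed
  qed
  ultimately show ?thesis by blast
qed

lemma linear_injective_on_supported_imp_surjective:
  fixes T :: "('k \<Rightarrow> real) \<Rightarrow> 'k \<Rightarrow> real"
  assumes "finite K"
    and add: "\<And>u v. T (u + v) = T u + T v"
    and scale: "\<And>c u. T (\<lambda>x. c * u x) = (\<lambda>x. c * T u x)"
    and into: "T ` supported_on K \<subseteq> supported_on K"
    and kernel: "\<And>u. u \<in> supported_on K \<Longrightarrow> T u = 0 \<Longrightarrow> u = 0"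
  shows "T ` supported_on K = supported_on K"
proof -
  interpret V: vector_space "\<lambda>c (u :: 'k \<Rightarrow> real) x. c * u x" by (rule fun_vector_space)
  have lin: "Vector_Spaces.linear (\<lambda>c u x. c * u x) (\<lambda>c u x. c * u x) T"
    using fun_vector_space add scale by (simp add: Vector_Spaces.linear_iff)
  interpret T: Vector_Spaces.linear "\<lambda>c u x. c * u x" "\<lambda>c u x. c * u x" T by (fact lin)
  note span_eq = supported_on_eq_span_indicators[OF \<open>finite K\<close>]
  have "V.subspace (supported_on K)"
    by (subst span_eq) (rule V.subspace_span)
  then have "inj_on T (supported_on K)"
    using T.inj_on_iff_eq_0 kernel by blast
  then show ?thesis
    using V.linear_inj_on_finite_span_imp_surj[OF finite_imageI[OF \<open>finite K\<close>] lin] into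
    unfolding span_eq by blast
qed

lemma sum_mod_shift:
  fixes \<phi> :: "nat \<Rightarrow> 'a::comm_monoid_add"
  assumes "N \<ge> 1"
  shows "(\<Sum>i\<in>{0..<N}. \<phi> ((i + 1) mod N)) = (\<Sum>i\<in>{0..<N}. \<phi> i)"
proof -
  obtain m where m: "N = Suc m" using assms by (cases N) auto
  have "(\<Sum>i<Suc m. \<phi> ((i + 1) mod Suc m)) = (\<Sum>i<m. \<phi> (Suc i)) + \<phi> 0"
    by (simp add: sum.lessThan_Suc)
  also have "\<dots> = (\<Sum>i<Suc m. \<phi> i)"
    by (subst sum.lessThan_Suc_shift) (simp add: add.commute)
  finally show ?thesis using m atLeast0LessThan by simp
qed

lemma square_sum_le_weighted:
  fixes x w :: "'a \<Rightarrow> real"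
  assumes "\<And>j. j \<in> J \<Longrightarrow> w j > 0"
  shows "(\<Sum>j\<in>J. x j)\<^sup>2 \<le> (\<Sum>j\<in>J. (x j)\<^sup>2 / w j) * (\<Sum>j\<in>J. w j)"
proof -
  have "(\<Sum>j\<in>J. x j) = (\<Sum>j\<in>J. x j / sqrt (w j) * sqrt (w j))"
    using assms by (intro sum.cong) (auto simp: less_imp_neq[symmetric])
  also have "\<dots>\<^sup>2 \<le> (\<Sum>j\<in>J. (x j / sqrt (w j))\<^sup>2) * (\<Sum>j\<in>J. (sqrt (w j))\<^sup>2)"
    by (rule Cauchy_Schwarz_ineq_sum)
  also have "\<dots> = (\<Sum>j\<in>J. (x j)\<^sup>2 / w j) * (\<Sum>j\<in>J. w j)"
    using assms by (intro arg_cong2[where f = "(*)"] sum.cong) (auto simp: power_divide less_imp_le)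
  finally show ?thesis .
qed

lemma cross_term_nonneg:
  fixes a b p q d r :: real
  assumes "d > 0" "r > 0" "p\<^sup>2 \<le> d * a" "q\<^sup>2 \<le> d * b"
  shows "0 \<le> a / r\<^sup>2 + r\<^sup>2 * b + 2 * p * q / d"
proof -
  have "0 \<le> (p / r + r * q)\<^sup>2 / d"
    using assms by simp
  also have "\<dots> = p\<^sup>2 / d / r\<^sup>2 + r\<^sup>2 * (q\<^sup>2 / d) + 2 * p * q / d"
    using assms by (simp add: power2_eq_square field_simps)
  also have "\<dots> \<le> a / r\<^sup>2 + r\<^sup>2 * b + 2 * p * q / d"
  proof -
    have "p\<^sup>2 / d / r\<^sup>2 \<le> a / r\<^sup>2"
      using assms by (intro divide_right_mono) (simp_all add: pos_divide_le_eq mult.commute)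
    moreover have "r\<^sup>2 * (q\<^sup>2 / d) \<le> r\<^sup>2 * b"
      using assms by (intro mult_left_mono) (simp_all add: pos_divide_le_eq mult.commute)
    ultimately show ?thesis by linarith
  qed
  finally show ?thesis .
qed

lemma imin_succ_mod:
  assumes "i < N"
  shows "imin N ((i + 1) mod N) = i"
proof (cases "i + 1 < N")
  case True
  then show ?thesis unfolding imin_def by simp
next
  case False
  with assms have "i + 1 = N" by simp
  then show ?thesis unfolding imin_def by simp
qed

lemma torus_summation_by_parts:
  fixes h \<Phi> :: "nat \<Rightarrow> 'a::comm_ring"
  assumes "N \<ge> 1"
  shows "(\<Sum>i\<in>{0..<N}. h i * (\<Phi> i - \<Phi> (imin N i)))
    = (\<Sum>i\<in>{0..<N}. (h i - h ((i + 1) mod N)) * \<Phi> i)"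
proof -
  have "(\<Sum>i\<in>{0..<N}. h i * \<Phi> (imin N i))
      = (\<Sum>i\<in>{0..<N}. h ((i + 1) mod N) * \<Phi> (imin N ((i + 1) mod N)))"
    using sum_mod_shift[OF assms, of "\<lambda>i. h i * \<Phi> (imin N i)"] by simp
  also have "\<dots> = (\<Sum>i\<in>{0..<N}. h ((i + 1) mod N) * \<Phi> i)"
    by (intro sum.cong refl) (simp add: imin_succ_mod[simplified])
  finally show ?thesis
    by (simp add: algebra_simps sum_subtractf)
qed

lemma flux_dissipative:
  assumes "N \<ge> 1" "dvel vstar L \<ge> 0" "dx \<ge> 0" "dt \<ge> 0"
  shows "0 \<le> (\<Sum>i\<in>Icells N. h i j * (flux N L vstar dx dt h i j - flux N L vstar dx dt h (imin N i) j))"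
proof -
  define a where "a = dvel vstar L * (vmid vstar L j / 2)"
  define b where "b = dvel vstar L * lam dx dt"
  let ?s = "\<lambda>i. (i + 1) mod N"
  have "b \<ge> 0"
    using assms unfolding b_def lam_def by simp
  have upwind: "(h i j - h (?s i) j) * flux N L vstar dx dt h i j
      = a * ((h i j)\<^sup>2 - (h (?s i) j)\<^sup>2) + b * (h (?s i) j - h i j)\<^sup>2" for i
    unfolding flux_def a_def b_def by (simp add: power2_eq_square field_simps)
  have "(\<Sum>i\<in>Icells N. h i j * (flux N L vstar dx dt h i j - flux N L vstar dx dt h (imin N i) j))
      = (\<Sum>i\<in>{0..<N}. (h i j - h (?s i) j) * flux N L vstar dx dt h i j)"
    unfolding Icells_def by (rule torus_summation_by_parts[OF assms(1)])
  also have "\<dots> = (\<Sum>i\<in>{0..<N}. a * ((h i j)\<^sup>2 - (h (?s i) j)\<^sup>2) + b * (h (?s i) j - h i j)\<^sup>2)"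
    by (intro sum.cong refl) (rule upwind)
  also have "\<dots> = a * ((\<Sum>i\<in>{0..<N}. (h i j)\<^sup>2) - (\<Sum>i\<in>{0..<N}. (h (?s i) j)\<^sup>2))
        + (\<Sum>i\<in>{0..<N}. b * (h (?s i) j - h i j)\<^sup>2)"
    by (simp add: sum.distrib sum_subtractf sum_distrib_left right_diff_distrib)
  also have "\<dots> = (\<Sum>i\<in>{0..<N}. b * (h (?s i) j - h i j)\<^sup>2)"
    using sum_mod_shift[OF assms(1), of "\<lambda>i. (h i j)\<^sup>2"] by simp
  also have "\<dots> \<ge> 0"
    using \<open>b \<ge> 0\<close> by (intro sum_nonneg) simp
  finally show ?thesis .
qed

locale linearized_scheme =
  fixes N L :: nat and vstar dx dt rs :: real and chi1 chi2 :: "int \<Rightarrow> real"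
  assumes N_pos: "N \<ge> 1" and L_pos: "L \<ge> 1" and vstar_pos: "vstar > 0"
    and dx_pos: "dx > 0" and dt_pos: "dt > 0" and rs_pos: "rs > 0"
    and chi_pos: "\<forall>j\<in>Jcells L. chi1 j > 0 \<and> chi2 j > 0"
    and chi1_mass: "(\<Sum>j\<in>Jcells L. dvel vstar L * chi1 j) = 1"
    and chi2_mass: "(\<Sum>j\<in>Jcells L. dvel vstar L * chi2 j) = 1"
begin

abbreviation dv :: real where "dv \<equiv> dvel vstar L"

lemma dv_pos: "dv > 0"
  unfolding dvel_def using vstar_pos L_pos by simp

definition transport :: "(nat \<Rightarrow> int \<Rightarrow> real) \<Rightarrow> nat \<Rightarrow> int \<Rightarrow> real" where
  "transport h i j = (flux N L vstar dx dt h i j - flux N L vstar dx dt h (imin N i) j) / (dx * dv)"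

definition implicit_f :: "(nat \<Rightarrow> int \<Rightarrow> real) \<Rightarrow> (nat \<Rightarrow> int \<Rightarrow> real) \<Rightarrow> nat \<Rightarrow> int \<Rightarrow> real" where
  "implicit_f F G i j = F i j / dt + transport F i j + rs * chi1 j * dens vstar L G i + F i j / rs"

definition implicit_g :: "(nat \<Rightarrow> int \<Rightarrow> real) \<Rightarrow> (nat \<Rightarrow> int \<Rightarrow> real) \<Rightarrow> nat \<Rightarrow> int \<Rightarrow> real" where
  "implicit_g F G i j = G i j / dt + transport G i j + chi2 j * dens vstar L F i / rs + rs * G i j"

lemma lin_scheme_iff_implicit:
  "lin_scheme N L vstar dx dt chi1 chi2 rs f g \<longleftrightarrow>
    (\<forall>n. \<forall>i\<in>Icells N. \<forall>j\<in>Jcells L.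
       implicit_f (f (Suc n)) (g (Suc n)) i j = f n i j / dt \<and>
       implicit_g (f (Suc n)) (g (Suc n)) i j = g n i j / dt)"
  unfolding lin_scheme_def implicit_f_def implicit_g_def transport_def diff_divide_distrib
  by (auto simp: algebra_simps)

lemma implicit_f_lincomb:
  "implicit_f (\<lambda>i j. a * F i j + b * F' i j) (\<lambda>i j. a * G i j + b * G' i j) i j
    = a * implicit_f F G i j + b * implicit_f F' G' i j"
  unfolding implicit_f_def transport_def flux_def dens_def
  by (simp add: sum.distrib sum_distrib_left algebra_simps add_divide_distrib diff_divide_distrib)

lemma implicit_g_lincomb:
  "implicit_g (\<lambda>i j. a * F i j + b * F' i j) (\<lambda>i j. a * G i j + b * G' i j) i j
    = a * implicit_g F G i j + b * implicit_g F' G' i j"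
  unfolding implicit_g_def transport_def flux_def dens_def
  by (simp add: sum.distrib sum_distrib_left algebra_simps add_divide_distrib diff_divide_distrib)

lemma dens_square_le:
  assumes "\<forall>j\<in>Jcells L. chi j > 0" and "(\<Sum>j\<in>Jcells L. dv * chi j) = 1"
  shows "(dens vstar L F i)\<^sup>2 \<le> dv * (\<Sum>j\<in>Jcells L. (F i j)\<^sup>2 / chi j)"
proof -
  have "(dens vstar L F i)\<^sup>2 \<le> (\<Sum>j\<in>Jcells L. (dv * F i j)\<^sup>2 / (dv * chi j)) * (\<Sum>j\<in>Jcells L. dv * chi j)"
    unfolding dens_def using assms(1) dv_pos by (intro square_sum_le_weighted) simp
  also have "\<dots> = (\<Sum>j\<in>Jcells L. dv * ((F i j)\<^sup>2 / chi j))"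
    using assms(2) dv_pos by (simp add: power2_eq_square ac_simps)
  finally show ?thesis
    by (simp add: sum_distrib_left)
qed

lemma transport_pairing_nonneg:
  assumes "\<forall>j\<in>Jcells L. w j \<ge> 0"
  shows "0 \<le> (\<Sum>i\<in>Icells N. \<Sum>j\<in>Jcells L. w j * (h i j * transport h i j))"
proof -
  have "(\<Sum>i\<in>Icells N. \<Sum>j\<in>Jcells L. w j * (h i j * transport h i j))
      = (\<Sum>j\<in>Jcells L. w j / (dx * dv) *
           (\<Sum>i\<in>Icells N. h i j * (flux N L vstar dx dt h i j - flux N L vstar dx dt h (imin N i) j)))"
    unfolding transport_def by (subst sum.swap) (simp add: sum_distrib_left)
  also have "\<dots> \<ge> 0"
    using assms dx_pos dv_pos dt_pos
    by (intro sum_nonneg[OF mult_nonneg_nonneg] flux_dissipative N_pos) simp_all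
  finally show ?thesis .
qed

definition weighted_energy :: "(nat \<Rightarrow> int \<Rightarrow> real) \<Rightarrow> (nat \<Rightarrow> int \<Rightarrow> real) \<Rightarrow> real" where
  "weighted_energy F G =
     (\<Sum>i\<in>Icells N. \<Sum>j\<in>Jcells L. (F i j)\<^sup>2 / (rs * chi1 j) + rs * (G i j)\<^sup>2 / chi2 j)"

lemma implicit_pairing_eq:
  assumes "j \<in> Jcells L"
  shows "F i j / (rs * chi1 j) * implicit_f F G i j + rs * G i j / chi2 j * implicit_g F G i j
    = ((F i j)\<^sup>2 / (rs * chi1 j) + rs * (G i j)\<^sup>2 / chi2 j) / dt
      + ((F i j)\<^sup>2 / chi1 j / rs\<^sup>2 + rs\<^sup>2 * ((G i j)\<^sup>2 / chi2 j)
         + (dens vstar L G i * F i j + dens vstar L F i * G i j))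
      + (1 / (rs * chi1 j) * (F i j * transport F i j) + rs / chi2 j * (G i j * transport G i j))"
proof -
  have "chi1 j > 0" "chi2 j > 0"
    using chi_pos assms by auto
  then show ?thesis
    using rs_pos dt_pos unfolding implicit_f_def implicit_g_def
    by (simp add: power2_eq_square field_simps)
qed

lemma cell_coupling_nonneg:
  "0 \<le> (\<Sum>j\<in>Jcells L. (F i j)\<^sup>2 / chi1 j / rs\<^sup>2 + rs\<^sup>2 * ((G i j)\<^sup>2 / chi2 j)
          + (dens vstar L G i * F i j + dens vstar L F i * G i j))"
proof -
  let ?a = "\<Sum>j\<in>Jcells L. (F i j)\<^sup>2 / chi1 j" and ?b = "\<Sum>j\<in>Jcells L. (G i j)\<^sup>2 / chi2 j"
  have sum_eq_dens: "(\<Sum>j\<in>Jcells L. H i j) = dens vstar L H i / dv" for H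
    unfolding dens_def using dv_pos by (simp add: sum_distrib_left[symmetric])
  have "0 \<le> ?a / rs\<^sup>2 + rs\<^sup>2 * ?b + 2 * dens vstar L F i * dens vstar L G i / dv"
    using chi_pos chi1_mass chi2_mass
    by (intro cross_term_nonneg dv_pos rs_pos dens_square_le) auto
  also have "\<dots> = (\<Sum>j\<in>Jcells L. (F i j)\<^sup>2 / chi1 j / rs\<^sup>2 + rs\<^sup>2 * ((G i j)\<^sup>2 / chi2 j)
          + (dens vstar L G i * F i j + dens vstar L F i * G i j))"
    unfolding sum.distrib sum_divide_distrib[symmetric] sum_distrib_left[symmetric]
      sum_eq_dens[of F] sum_eq_dens[of G]
    using dv_pos by (simp add: field_simps)
  finally show ?thesis .
qed

lemma implicit_coercive:
  "weighted_energy F G / dt \<le>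
    (\<Sum>i\<in>Icells N. \<Sum>j\<in>Jcells L.
       F i j / (rs * chi1 j) * implicit_f F G i j + rs * G i j / chi2 j * implicit_g F G i j)"
proof -
  let ?I = "Icells N" and ?J = "Jcells L"
  let ?coupling = "\<lambda>i j. (F i j)\<^sup>2 / chi1 j / rs\<^sup>2 + rs\<^sup>2 * ((G i j)\<^sup>2 / chi2 j)
    + (dens vstar L G i * F i j + dens vstar L F i * G i j)"
  have "(\<Sum>i\<in>?I. \<Sum>j\<in>?J.
       F i j / (rs * chi1 j) * implicit_f F G i j + rs * G i j / chi2 j * implicit_g F G i j)
    = (\<Sum>i\<in>?I. \<Sum>j\<in>?J. ((F i j)\<^sup>2 / (rs * chi1 j) + rs * (G i j)\<^sup>2 / chi2 j) / dt + ?coupling i j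
      + (1 / (rs * chi1 j) * (F i j * transport F i j) + rs / chi2 j * (G i j * transport G i j)))"
    by (intro sum.cong refl) (erule implicit_pairing_eq)
  also have "\<dots> = weighted_energy F G / dt + (\<Sum>i\<in>?I. \<Sum>j\<in>?J. ?coupling i j)
      + ((\<Sum>i\<in>?I. \<Sum>j\<in>?J. 1 / (rs * chi1 j) * (F i j * transport F i j))
      + (\<Sum>i\<in>?I. \<Sum>j\<in>?J. rs / chi2 j * (G i j * transport G i j)))"
    unfolding weighted_energy_def add_divide_distrib sum_divide_distrib sum.distrib ..
  finally have pairing_eq: "(\<Sum>i\<in>?I. \<Sum>j\<in>?J.
       F i j / (rs * chi1 j) * implicit_f F G i j + rs * G i j / chi2 j * implicit_g F G i j)
    = weighted_energy F G / dt + (\<Sum>i\<in>?I. \<Sum>j\<in>?J. ?coupling i j)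
      + ((\<Sum>i\<in>?I. \<Sum>j\<in>?J. 1 / (rs * chi1 j) * (F i j * transport F i j))
      + (\<Sum>i\<in>?I. \<Sum>j\<in>?J. rs / chi2 j * (G i j * transport G i j)))" .
  moreover have "0 \<le> (\<Sum>i\<in>?I. \<Sum>j\<in>?J. ?coupling i j)"
    by (rule sum_nonneg) (rule cell_coupling_nonneg)
  moreover have "0 \<le> (\<Sum>i\<in>?I. \<Sum>j\<in>?J. 1 / (rs * chi1 j) * (F i j * transport F i j))"
    using chi_pos rs_pos by (intro transport_pairing_nonneg) (simp add: less_imp_le)
  moreover have "0 \<le> (\<Sum>i\<in>?I. \<Sum>j\<in>?J. rs / chi2 j * (G i j * transport G i j))"
    using chi_pos rs_pos by (intro transport_pairing_nonneg) (simp add: less_imp_le)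
  ultimately show ?thesis
    unfolding pairing_eq by linarith
qed

lemma implicit_kernel_trivial:
  assumes "\<forall>i\<in>Icells N. \<forall>j\<in>Jcells L. implicit_f F G i j = 0 \<and> implicit_g F G i j = 0"
  shows "\<forall>i\<in>Icells N. \<forall>j\<in>Jcells L. F i j = 0 \<and> G i j = 0"
proof (intro ballI)
  fix i j assume i: "i \<in> Icells N" and j: "j \<in> Jcells L"
  let ?e = "\<lambda>i j. (F i j)\<^sup>2 / (rs * chi1 j) + rs * (G i j)\<^sup>2 / chi2 j"
  have fin: "finite (Icells N)" "finite (Jcells L)"
    unfolding Icells_def Jcells_def by simp_all
  have terms_nonneg: "0 \<le> (F i j)\<^sup>2 / (rs * chi1 j)" "0 \<le> rs * (G i j)\<^sup>2 / chi2 j" if "j \<in> Jcells L" for i j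
    using that chi_pos rs_pos by auto
  have e_nonneg: "0 \<le> ?e i j" if "j \<in> Jcells L" for i j
    using terms_nonneg[OF that] by simp
  have row_nonneg: "0 \<le> (\<Sum>j\<in>Jcells L. ?e i j)" for i
    using e_nonneg by (rule sum_nonneg)
  have "weighted_energy F G / dt \<le> 0"
    using implicit_coercive[of F G] assms by simp
  then have "(\<Sum>i\<in>Icells N. \<Sum>j\<in>Jcells L. ?e i j) \<le> 0"
    using dt_pos unfolding weighted_energy_def by (simp add: divide_le_0_iff)
  moreover have "0 \<le> (\<Sum>i\<in>Icells N. \<Sum>j\<in>Jcells L. ?e i j)"
    using row_nonneg by (rule sum_nonneg)
  ultimately have "\<forall>i\<in>Icells N. (\<Sum>j\<in>Jcells L. ?e i j) = 0"
    using sum_nonneg_eq_0_iff[OF fin(1), of "\<lambda>i. \<Sum>j\<in>Jcells L. ?e i j"] row_nonneg by simp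
  then have "(\<Sum>j\<in>Jcells L. ?e i j) = 0"
    using i by (rule bspec)
  then have "\<forall>j\<in>Jcells L. ?e i j = 0"
    using sum_nonneg_eq_0_iff[OF fin(2), of "?e i"] e_nonneg by simp
  then have "?e i j = 0"
    using j by (rule bspec)
  then have "(F i j)\<^sup>2 / (rs * chi1 j) = 0 \<and> rs * (G i j)\<^sup>2 / chi2 j = 0"
    using terms_nonneg[where i = i, OF j] by linarith
  moreover have "chi1 j \<noteq> 0" "chi2 j \<noteq> 0"
    using chi_pos j by (simp_all add: less_imp_neq[symmetric])
  ultimately show "F i j = 0 \<and> G i j = 0"
    using rs_pos by simp
qed

lemma implicit_step_unique:
  assumes "\<forall>i\<in>Icells N. \<forall>j\<in>Jcells L.
    implicit_f F G i j = implicit_f F' G' i j \<and> implicit_g F G i j = implicit_g F' G' i j"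
  shows "\<forall>i\<in>Icells N. \<forall>j\<in>Jcells L. F i j = F' i j \<and> G i j = G' i j"
proof -
  have "\<forall>i\<in>Icells N. \<forall>j\<in>Jcells L.
      implicit_f (\<lambda>i j. 1 * F i j + (-1) * F' i j) (\<lambda>i j. 1 * G i j + (-1) * G' i j) i j = 0 \<and>
      implicit_g (\<lambda>i j. 1 * F i j + (-1) * F' i j) (\<lambda>i j. 1 * G i j + (-1) * G' i j) i j = 0"
    using assms by (simp only: implicit_f_lincomb implicit_g_lincomb) simp
  from implicit_kernel_trivial[OF this] show ?thesis
    by simp
qed

text \<open>Stacking the two grid functions into one function on \<open>bool \<times> I \<times> J\<close> turns an implicit
  time step into a linear endomorphism of a finite-dimensional space.\<close>

definition implicit_op :: "(bool \<times> nat \<times> int \<Rightarrow> real) \<Rightarrow> bool \<times> nat \<times> int \<Rightarrow> real" where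
  "implicit_op u = (\<lambda>(b, i, j). if i \<in> Icells N \<and> j \<in> Jcells L
     then (if b then implicit_f else implicit_g) (\<lambda>i j. u (True, i, j)) (\<lambda>i j. u (False, i, j)) i j
     else 0)"

lemma implicit_op_apply:
  "implicit_op u (b, i, j) = (if i \<in> Icells N \<and> j \<in> Jcells L
     then (if b then implicit_f else implicit_g) (\<lambda>i j. u (True, i, j)) (\<lambda>i j. u (False, i, j)) i j
     else 0)"
  by (simp add: implicit_op_def)

lemma implicit_op_lincomb:
  "implicit_op (\<lambda>x. a * u x + c * v x) = (\<lambda>x. a * implicit_op u x + c * implicit_op v x)"
proof
  fix x :: "bool \<times> nat \<times> int"
  obtain b i j where x: "x = (b, i, j)"
    by (cases x) auto
  show "implicit_op (\<lambda>x. a * u x + c * v x) x = a * implicit_op u x + c * implicit_op v x"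
    unfolding x implicit_op_apply
    by (simp add: implicit_f_lincomb implicit_g_lincomb)
qed

lemma implicit_op_kernel:
  assumes u: "u \<in> supported_on (UNIV \<times> Icells N \<times> Jcells L)" and "implicit_op u = 0"
  shows "u = 0"
proof
  fix x :: "bool \<times> nat \<times> int"
  obtain b i j where x: "x = (b, i, j)"
    using prod_cases3 by blast
  let ?U = "\<lambda>i j. u (True, i, j)" and ?V = "\<lambda>i j. u (False, i, j)"
  have zero: "implicit_op u (b, i, j) = 0" for b i j
    using \<open>implicit_op u = 0\<close> by simp
  have "implicit_f ?U ?V i j = 0 \<and> implicit_g ?U ?V i j = 0"
    if "i \<in> Icells N" "j \<in> Jcells L" for i j
    using that zero[of True i j] zero[of False i j] by (simp add: implicit_op_apply)
  then have inside: "?U i j = 0 \<and> ?V i j = 0" if "i \<in> Icells N" "j \<in> Jcells L" for i j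
    using implicit_kernel_trivial that by blast
  show "u x = 0 x"
  proof (cases "i \<in> Icells N \<and> j \<in> Jcells L")
    case True
    then show ?thesis
      using inside[of i j] unfolding x by (cases b) simp_all
  next
    case False
    then show ?thesis
      using u unfolding x supported_on_def by simp
  qed
qed

lemma implicit_step_solvable:
  "\<exists>F G. \<forall>i\<in>Icells N. \<forall>j\<in>Jcells L. implicit_f F G i j = R i j \<and> implicit_g F G i j = S i j"
proof -
  let ?K = "(UNIV :: bool set) \<times> Icells N \<times> Jcells L"
  let ?r = "\<lambda>(b, i, j). if i \<in> Icells N \<and> j \<in> Jcells L then if b then R i j else S i j else 0"
  have "implicit_op ` supported_on ?K = supported_on ?K"
  proof (rule linear_injective_on_supported_imp_surjective)
    show "finite ?K"
      by (intro finite_cartesian_product) (simp_all add: Icells_def Jcells_def)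
    show "implicit_op (u + v) = implicit_op u + implicit_op v" for u v
      using implicit_op_lincomb[of 1 u 1 v] by (simp add: plus_fun_def)
    show "implicit_op (\<lambda>x. c * u x) = (\<lambda>x. c * implicit_op u x)" for c u
      using implicit_op_lincomb[of c u 0 u] by simp
    have "implicit_op u x = 0" if "x \<notin> ?K" for u x
    proof -
      obtain b i j where x: "x = (b, i, j)"
        using prod_cases3 by blast
      have "\<not> (i \<in> Icells N \<and> j \<in> Jcells L)"
        using that unfolding x by simp
      then show ?thesis
        unfolding x implicit_op_apply by (rule if_not_P)
    qed
    then show "implicit_op ` supported_on ?K \<subseteq> supported_on ?K"
      unfolding supported_on_def image_subset_iff by simp
    show "u = 0" if "u \<in> supported_on ?K" and "implicit_op u = 0" for u
      using that by (rule implicit_op_kernel)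
  qed
  moreover have "?r \<in> supported_on ?K"
    by (auto simp: supported_on_def)
  ultimately have "?r \<in> implicit_op ` supported_on ?K"
    by (simp only:)
  then obtain u where "?r = implicit_op u"
    by (rule imageE)
  then have r: "implicit_op u (b, i, j) = ?r (b, i, j)" for b i j
    by simp
  show ?thesis
  proof (rule exI[of _ "\<lambda>i j. u (True, i, j)"], rule exI[of _ "\<lambda>i j. u (False, i, j)"], intro ballI)
    fix i j assume "i \<in> Icells N" "j \<in> Jcells L"
    then show "implicit_f (\<lambda>i j. u (True, i, j)) (\<lambda>i j. u (False, i, j)) i j = R i j \<and>
        implicit_g (\<lambda>i j. u (True, i, j)) (\<lambda>i j. u (False, i, j)) i j = S i j"
      using r[of True i j] r[of False i j] by (simp add: implicit_op_apply)
  qed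
qed

lemma lin_scheme_exists: "\<exists>f g. f 0 = f0 \<and> g 0 = g0 \<and> lin_scheme N L vstar dx dt chi1 chi2 rs f g"
proof -
  have "\<forall>FG. \<exists>FG'. \<forall>i\<in>Icells N. \<forall>j\<in>Jcells L.
      implicit_f (fst FG') (snd FG') i j = fst FG i j / dt \<and> implicit_g (fst FG') (snd FG') i j = snd FG i j / dt"
  proof
    fix FG :: "(nat \<Rightarrow> int \<Rightarrow> real) \<times> (nat \<Rightarrow> int \<Rightarrow> real)"
    obtain F G where "\<forall>i\<in>Icells N. \<forall>j\<in>Jcells L.
        implicit_f F G i j = fst FG i j / dt \<and> implicit_g F G i j = snd FG i j / dt"
      using implicit_step_solvable[of "\<lambda>i j. fst FG i j / dt" "\<lambda>i j. snd FG i j / dt"] by blast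
    then show "\<exists>FG'. \<forall>i\<in>Icells N. \<forall>j\<in>Jcells L.
        implicit_f (fst FG') (snd FG') i j = fst FG i j / dt \<and> implicit_g (fst FG') (snd FG') i j = snd FG i j / dt"
      by (intro exI[of _ "(F, G)"]) simp
  qed
  then obtain step where step: "\<forall>FG. \<forall>i\<in>Icells N. \<forall>j\<in>Jcells L.
      implicit_f (fst (step FG)) (snd (step FG)) i j = fst FG i j / dt \<and>
      implicit_g (fst (step FG)) (snd (step FG)) i j = snd FG i j / dt"
    by (rule choice_iff[THEN iffD1, THEN exE])
  define fg where "fg n = (step ^^ n) (f0, g0)" for n
  have "lin_scheme N L vstar dx dt chi1 chi2 rs (\<lambda>n. fst (fg n)) (\<lambda>n. snd (fg n))"
    unfolding lin_scheme_iff_implicit fg_def funpow.simps(2) o_apply by (intro allI spec[OF step])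
  then show ?thesis
    by (intro exI[of _ "\<lambda>n. fst (fg n)"] exI[of _ "\<lambda>n. snd (fg n)"]) (simp add: fg_def)
qed

lemma lin_scheme_unique:
  assumes "lin_scheme N L vstar dx dt chi1 chi2 rs f g" and "lin_scheme N L vstar dx dt chi1 chi2 rs f' g'"
    and "\<forall>i\<in>Icells N. \<forall>j\<in>Jcells L. f' 0 i j = f 0 i j \<and> g' 0 i j = g 0 i j"
  shows "\<forall>i\<in>Icells N. \<forall>j\<in>Jcells L. f' n i j = f n i j \<and> g' n i j = g n i j"
proof (induction n)
  case 0
  show ?case using assms(3) .
next
  case (Suc n)
  then have "\<forall>i\<in>Icells N. \<forall>j\<in>Jcells L.
      implicit_f (f' (Suc n)) (g' (Suc n)) i j = implicit_f (f (Suc n)) (g (Suc n)) i j \<and>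
      implicit_g (f' (Suc n)) (g' (Suc n)) i j = implicit_g (f (Suc n)) (g (Suc n)) i j"
    using assms(1,2) unfolding lin_scheme_iff_implicit by simp
  then show ?case
    by (rule implicit_step_unique)
qed

end

theorem corollary4p2:
  fixes N L :: nat and vstar dx dt rs :: real
    and chi1 chi2 :: "int \<Rightarrow> real"
    and f0 g0 :: "nat \<Rightarrow> int \<Rightarrow> real"
  assumes "N \<ge> 1" and "L \<ge> 1" and "vstar > 0" and "dx > 0" and "dt > 0" and "rs > 0"
    and "\<forall>j\<in>Jcells L. chi1 j > 0 \<and> chi2 j > 0"
    and "\<forall>j\<in>Jcells L. chi1 j = chi1 (1 - j) \<and> chi2 j = chi2 (1 - j)"
    and "(\<Sum>j\<in>Jcells L. dvel vstar L * chi1 j) = 1"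
    and "(\<Sum>j\<in>Jcells L. dvel vstar L * chi2 j) = 1"
  shows "\<exists>f g. (\<forall>i\<in>Icells N. \<forall>j\<in>Jcells L. f 0 i j = f0 i j \<and> g 0 i j = g0 i j)
           \<and> lin_scheme N L vstar dx dt chi1 chi2 rs f g
           \<and> (\<forall>f' g'. (\<forall>i\<in>Icells N. \<forall>j\<in>Jcells L. f' 0 i j = f0 i j \<and> g' 0 i j = g0 i j)
                  \<and> lin_scheme N L vstar dx dt chi1 chi2 rs f' g'
                  \<longrightarrow> (\<forall>n. \<forall>i\<in>Icells N. \<forall>j\<in>Jcells L. f' n i j = f n i j \<and> g' n i j = g n i j))"
proof -
  interpret linearized_scheme N L vstar dx dt rs chi1 chi2
    using assms(1-7,9,10) by unfold_locales
  obtain f g where init: "f 0 = f0" "g 0 = g0"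
    and scheme: "lin_scheme N L vstar dx dt chi1 chi2 rs f g"
    using lin_scheme_exists by blast
  show ?thesis
  proof (rule exI[of _ f], rule exI[of _ g], intro conjI allI impI)
    show "\<forall>i\<in>Icells N. \<forall>j\<in>Jcells L. f 0 i j = f0 i j \<and> g 0 i j = g0 i j"
      using init by simp
    show "lin_scheme N L vstar dx dt chi1 chi2 rs f g"
      by (fact scheme)
    fix f' g' n
    assume other: "(\<forall>i\<in>Icells N. \<forall>j\<in>Jcells L. f' 0 i j = f0 i j \<and> g' 0 i j = g0 i j)
      \<and> lin_scheme N L vstar dx dt chi1 chi2 rs f' g'"
    then have "\<forall>i\<in>Icells N. \<forall>j\<in>Jcells L. f' 0 i j = f 0 i j \<and> g' 0 i j = g 0 i j"
      using init by simp
    with other show "\<forall>i\<in>Icells N. \<forall>j\<in>Jcells L. f' n i j = f n i j \<and> g' n i j = g n i j"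
      using lin_scheme_unique[OF scheme] by blast
  qed
qed

end
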